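(* For all $n,k\in\mathbb Z$, the sum of the weights of all hybrid lattice paths from $(0,0)$ to $(k,n-k)$ equals $\binom{n}{k}_w$.
   Context: Let $(w(s,t))_{s,t\in\mathbb Z}$ be commuting invertible variables, $W(s,t)=\prod_{j=1}^t w(s,j)$, with the product convention $\prod_{j=l}^m A_j=A_l\cdots A_m$ if $m>l-1$, $=1$ if $m=l-1$, $=A_{l-1}^{-1}\cdots A_{m+1}^{-1}$ if $m<l-1$. The coefficients $\binom{n}{k}_w$ ($n,k\in\mathbb Z$) are the unique family with $\binom{n}{0}_w=\binom{n}{n}_w=1$ for all $n$ and $\binom{n+1}{k}_w=\binom{n}{k}_w+\binom{n}{k-1}_w W(k,n+1-k)$ whenever $(n+1,k)\ne(0,0)$. Hybrid lattice paths from $(0,0)$ to $(N,M)\in\mathbb Z^2$: (i) if $N,M\ge0$, sequences of unit north steps and east steps; (ii) if $N\ge 0>M$, sequences of moves each of which is either a single south step or an east–south combination (an east step immediately followed by a south step), the first move being a south step; (iii) if $N<0\le M$, sequences of moves each of which is either a single west step or a north–west combination (a north step immediately followed by a west step), the first move being a west step; (iv) if $N,M<0$, there are no paths. Weights: each single north or south step has weight $1$; an east step $(s-1,t)\to(s,t)$ has weight $W(s,t)$; a west step $(s,t)\to(s-1,t)$ has weight $W(s,t)^{-1}$; an east–south combination $(s-1,t)\to(s,t)\to(s,t-1)$ has weight $-W(s,t)$; a north–west combination $(s,t-1)\to(s,t)\to(s-1,t)$ has weight $-W(s,t)^{-1}$. The weight of a path is the product of the weights of its steps/moves (the empty path to $(0,0)$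 has weight $1$). *)

theory Defs
  imports Main
begin

definition WW :: "(int \<Rightarrow> int \<Rightarrow> 'a::field) \<Rightarrow> int \<Rightarrow> int \<Rightarrow> 'a" where
  "WW w s t = (if t \<ge> 0 then (\<Prod>j\<in>{1..t}. w s j) else (\<Prod>j\<in>{t+1..0}. inverse (w s j)))"

definition is_wbinom :: "(int \<Rightarrow> int \<Rightarrow> 'a::field) \<Rightarrow> (int \<Rightarrow> int \<Rightarrow> 'a) \<Rightarrow> bool" where
  "is_wbinom w B \<longleftrightarrow>
     (\<forall>n. B n 0 = 1) \<and> (\<forall>n. B n n = 1) \<and>
     (\<forall>n k. (n + 1, k) \<noteq> (0, 0) \<longrightarrow> B (n + 1) k = B n k + B n (k - 1) * WW w k (n + 1 - k))"

definition wbinom :: "(int \<Rightarrow> int \<Rightarrow> 'a::field) \<Rightarrow> int \<Rightarrow> int \<Rightarrow> 'a" where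
  "wbinom w = (THE B. is_wbinom w B)"

datatype move = Nst | Est | Sst | Wst | ESst | NWst

fun move_disp :: "move \<Rightarrow> int \<times> int" where
  "move_disp Nst = (0, 1)"
| "move_disp Est = (1, 0)"
| "move_disp Sst = (0, -1)"
| "move_disp Wst = (-1, 0)"
| "move_disp ESst = (1, -1)"
| "move_disp NWst = (-1, 1)"

definition apply_move :: "int \<times> int \<Rightarrow> move \<Rightarrow> int \<times> int" where
  "apply_move p m = (fst p + fst (move_disp m), snd p + snd (move_disp m))"

fun move_weight :: "(int \<Rightarrow> int \<Rightarrow> 'a::field) \<Rightarrow> int \<times> int \<Rightarrow> move \<Rightarrow> 'a" where
  "move_weight w (x, y) Nst = 1"
| "move_weight w (x, y) Est = WW w (x + 1) y"
| "move_weight w (x, y) Sst = 1"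
| "move_weight w (x, y) Wst = inverse (WW w x y)"
| "move_weight w (x, y) ESst = - WW w (x + 1) y"
| "move_weight w (x, y) NWst = - inverse (WW w x (y + 1))"

fun end_point :: "int \<times> int \<Rightarrow> move list \<Rightarrow> int \<times> int" where
  "end_point p [] = p"
| "end_point p (m # ms) = end_point (apply_move p m) ms"

fun path_weight_from :: "(int \<Rightarrow> int \<Rightarrow> 'a::field) \<Rightarrow> int \<times> int \<Rightarrow> move list \<Rightarrow> 'a" where
  "path_weight_from w p [] = 1"
| "path_weight_from w p (m # ms) = move_weight w p m * path_weight_from w (apply_move p m) ms"

definition path_weight :: "(int \<Rightarrow> int \<Rightarrow> 'a::field) \<Rightarrow> move list \<Rightarrow> 'a" where
  "path_weight w ms = path_weight_from w (0, 0) ms"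

definition hybrid_paths :: "int \<Rightarrow> int \<Rightarrow> move list set" where
  "hybrid_paths N M =
    (if N \<ge> 0 \<and> M \<ge> 0 then {ms. set ms \<subseteq> {Nst, Est} \<and> end_point (0, 0) ms = (N, M)}
     else if N \<ge> 0 \<and> M < 0 then
       {ms. set ms \<subseteq> {Sst, ESst} \<and> ms \<noteq> [] \<and> hd ms = Sst \<and> end_point (0, 0) ms = (N, M)}
     else if N < 0 \<and> M \<ge> 0 then
       {ms. set ms \<subseteq> {Wst, NWst} \<and> ms \<noteq> [] \<and> hd ms = Wst \<and> end_point (0, 0) ms = (N, M)}
     else {})"

end

theory Submission
  imports Defs
begin

(*
  Let T(n,k) be the weighted sum over the paths to (k, n-k) in one of the three two-move systems
  N/E from (0,0), S/ES from (0,-1) and W/NW from (-1,0). Their supports are disjoint, so the sum of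
  all hybrid path weights to (k, n-k) is their total. Splitting off the last move shows that each T
  satisfies the recurrence T(n+1,k) = T(n,k) + T(n,k-1) W(k,n+1-k) up to a correction term
  at (n+1,k) = (0,0) (for W/NW the split yields the recurrence solved for T(n,k-1), and W \<noteq> 0 is
  needed). Along k = 0 and k = n the corrections cancel and the recurrence becomes a shift
  invariance, giving the boundary values 1. A solution of the recurrence with these boundary values
  is unique because W never vanishes.
*)

lemma WW_0 [simp]: "WW w s 0 = 1"
  by (simp add: WW_def)

lemma WW_nonzero:
  fixes w :: "int \<Rightarrow> int \<Rightarrow> 'a::field"
  assumes "\<forall>s t. w s t \<noteq> 0"
  shows "WW w s t \<noteq> 0"
  using assms by (auto simp: WW_def)

definition paths :: "move set \<Rightarrow> int \<times> int \<Rightarrow> int \<times> int \<Rightarrow> move list set" where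
  "paths A p q = {ms. set ms \<subseteq> A \<and> end_point p ms = q}"

definition path_sum :: "(int \<Rightarrow> int \<Rightarrow> 'a::field) \<Rightarrow> move set \<Rightarrow> int \<times> int \<Rightarrow> int \<times> int \<Rightarrow> 'a" where
  "path_sum w A p q = (\<Sum>ms\<in>paths A p q. path_weight_from w p ms)"

definition prev_point :: "int \<times> int \<Rightarrow> move \<Rightarrow> int \<times> int" where
  "prev_point q m = (fst q - fst (move_disp m), snd q - snd (move_disp m))"

definition linear_form :: "int \<Rightarrow> int \<Rightarrow> int \<times> int \<Rightarrow> int" where
  "linear_form a b p = a * fst p + b * snd p"

lemma end_point_append: "end_point p (xs @ ys) = end_point (end_point p xs) ys"
  by (induction xs arbitrary: p) auto

lemma path_weight_from_append:
  "path_weight_from w p (xs @ ys) = path_weight_from w p xs * path_weight_from w (end_point p xs) ys"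
  by (induction xs arbitrary: p) (auto simp: mult.assoc)

lemma apply_move_eq_iff: "apply_move r m = q \<longleftrightarrow> r = prev_point q m"
  by (cases r; cases q) (auto simp: apply_move_def prev_point_def)

lemma linear_form_end_point_ge:
  assumes "\<forall>m\<in>A. c \<le> linear_form a b (move_disp m)" and "set ms \<subseteq> A"
  shows "linear_form a b p + c * int (length ms) \<le> linear_form a b (end_point p ms)"
  using assms(2)
proof (induction ms arbitrary: p)
  case Nil
  then show ?case by simp
next
  case (Cons m ms)
  have "c \<le> linear_form a b (move_disp m)"
    using assms(1) Cons.prems by auto
  moreover have "linear_form a b (apply_move p m) = linear_form a b p + linear_form a b (move_disp m)"
    by (simp add: linear_form_def apply_move_def algebra_simps)
  ultimately show ?case
    using Cons.IH[of "apply_move p m"] Cons.prems by (simp add: algebra_simps)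
qed

lemma finite_paths:
  assumes "finite A" and "\<forall>m\<in>A. 1 \<le> linear_form a b (move_disp m)"
  shows "finite (paths A p q)"
proof (rule finite_subset)
  let ?l = "nat (linear_form a b q - linear_form a b p)"
  show "paths A p q \<subseteq> {ms. set ms \<subseteq> A \<and> length ms \<le> ?l}"
  proof safe
    fix ms assume "ms \<in> paths A p q"
    then have "set ms \<subseteq> A" "end_point p ms = q"
      by (auto simp: paths_def)
    with linear_form_end_point_ge[OF assms(2) this(1), of p] show "length ms \<le> ?l"
      by simp
  qed (auto simp: paths_def)
  show "finite {ms. set ms \<subseteq> A \<and> length ms \<le> ?l}"
    using finite_lists_length_le[OF assms(1)] .
qed

lemma paths_refl:
  assumes "\<forall>m\<in>A. 1 \<le> linear_form a b (move_disp m)"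
  shows "paths A p p = {[]}"
proof -
  have "ms = []" if "set ms \<subseteq> A" "end_point p ms = p" for ms
    using linear_form_end_point_ge[OF assms that(1), of p] that(2) by simp
  then show ?thesis
    by (auto simp: paths_def)
qed

lemma path_sum_refl:
  assumes "\<forall>m\<in>A. 1 \<le> linear_form a b (move_disp m)"
  shows "path_sum w A p p = 1"
  by (simp add: path_sum_def paths_refl[OF assms])

lemma path_sum_eq_0:
  assumes "\<forall>m\<in>A. 0 \<le> linear_form a b (move_disp m)" and "linear_form a b q < linear_form a b p"
  shows "path_sum w A p q = 0"
proof -
  have "end_point p ms \<noteq> q" if "set ms \<subseteq> A" for ms
    using linear_form_end_point_ge[OF assms(1) that, of p] assms(2) by auto
  then have "paths A p q = {}"
    by (auto simp: paths_def)
  then show ?thesis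
    by (simp add: path_sum_def)
qed

lemma paths_last_step:
  "paths A p q = (if q = p then {[]} else {}) \<union>
     (\<lambda>(m, ms). ms @ [m]) ` (SIGMA m:A. paths A p (prev_point q m))"
proof (rule set_eqI)
  fix xs
  show "xs \<in> paths A p q \<longleftrightarrow> xs \<in> (if q = p then {[]} else {}) \<union>
     (\<lambda>(m, ms). ms @ [m]) ` (SIGMA m:A. paths A p (prev_point q m))"
    by (cases xs rule: rev_cases) (auto simp: paths_def end_point_append apply_move_eq_iff)
qed

lemma path_sum_last_step:
  assumes "finite A" and "\<And>r. finite (paths A p r)"
  shows "path_sum w A p q = (if q = p then 1 else 0)
    + (\<Sum>m\<in>A. path_sum w A p (prev_point q m) * move_weight w (prev_point q m) m)"
proof -
  let ?snoc = "\<lambda>(m, ms). ms @ [m]"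
  let ?S = "SIGMA m:A. paths A p (prev_point q m)"
  have "inj_on ?snoc ?S"
    by (auto simp: inj_on_def)
  moreover have "finite ?S"
    using assms by auto
  ultimately have "path_sum w A p q = (if q = p then 1 else 0) + (\<Sum>(m, ms)\<in>?S. path_weight_from w p (ms @ [m]))"
    unfolding path_sum_def paths_last_step[of A p q]
    by (subst sum.union_disjoint) (auto simp: sum.reindex prod.case_distrib)
  also have "(\<Sum>(m, ms)\<in>?S. path_weight_from w p (ms @ [m]))
      = (\<Sum>m\<in>A. \<Sum>ms\<in>paths A p (prev_point q m). path_weight_from w p ms * move_weight w (prev_point q m) m)"
    using assms by (subst sum.Sigma) (auto simp: path_weight_from_append paths_def intro!: sum.cong)
  finally show ?thesis
    by (simp add: path_sum_def sum_distrib_right)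
qed

lemma int_shift_invariant_const:
  fixes f :: "int \<Rightarrow> 'b"
  assumes "\<And>n. f (n + 1) = f n"
  shows "f n = f m"
proof -
  have "f i = f 0" for i
  proof (induction i rule: int_induct[where k = 0])
    case (step2 i)
    then show ?case using assms[of "i - 1"] by simp
  qed (simp_all add: assms)
  then show ?thesis by metis
qed

text \<open>Column by column: once column k - 1 vanishes, column k \<ge> 1 is constant in n and hence
  vanishes by the diagonal; column k - 1 \<le> -1 is obtained from column k by dividing by X.\<close>

lemma pascal_rec_zero:
  fixes D X :: "int \<Rightarrow> int \<Rightarrow> 'a::field"
  assumes col_0: "\<And>n. D n 0 = 0" and diag: "\<And>n. D n n = 0"
    and rec: "\<And>n k. (n + 1, k) \<noteq> (0, 0) \<Longrightarrow> D (n + 1) k = D n k + D n (k - 1) * X n k"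
    and X_nonzero: "\<And>n k. X n k \<noteq> 0"
  shows "D n k = 0"
proof -
  have right: "\<forall>n. D n k = 0" if "0 \<le> k" for k
    using that
  proof (induction k rule: int_ge_induct)
    case base
    then show ?case using col_0 by simp
  next
    case (step k)
    have "D (i + 1) (k + 1) = D i (k + 1)" for i
      using rec[of i "k + 1"] step by simp
    then have "D n (k + 1) = D (k + 1) (k + 1)" for n
      by (rule int_shift_invariant_const)
    then show ?case using diag by simp
  qed
  have left: "\<forall>n. D n k = 0" if "k \<le> 0" for k
    using that
  proof (induction k rule: int_le_induct)
    case base
    then show ?case using col_0 by simp
  next
    case (step k)
    show ?case
    proof
      fix n
      show "D n (k - 1) = 0"
      proof (cases "(n + 1, k) = (0, 0)")
        case True
        then have "n = -1" "k = 0" by auto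
        then show ?thesis using diag[of "-1"] by simp
      next
        case False
        then have "D n (k - 1) * X n k = 0"
          using rec[OF False] step by simp
        then show ?thesis using X_nonzero by simp
      qed
    qed
  qed
  show ?thesis
    using left right by (cases "0 \<le> k") auto
qed

lemma is_wbinom_unique:
  fixes w :: "int \<Rightarrow> int \<Rightarrow> 'a::field"
  assumes "\<forall>s t. w s t \<noteq> 0" and B: "is_wbinom w B" and C: "is_wbinom w C"
  shows "B = C"
proof (intro ext)
  fix n k
  have "B n k - C n k = 0"
  proof (rule pascal_rec_zero[where X = "\<lambda>n k. WW w k (n + 1 - k)"])
    fix n k :: int
    assume "(n + 1, k) \<noteq> (0, 0)"
    then have "B (n + 1) k = B n k + B n (k - 1) * WW w k (n + 1 - k)"
      and "C (n + 1) k = C n k + C n (k - 1) * WW w k (n + 1 - k)"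
      using B C unfolding is_wbinom_def by blast+
    then show "B (n + 1) k - C (n + 1) k = B n k - C n k + (B n (k - 1) - C n (k - 1)) * WW w k (n + 1 - k)"
      by (simp add: algebra_simps)
  qed (use B C WW_nonzero[OF assms(1)] in \<open>simp_all add: is_wbinom_def\<close>)
  then show "B n k = C n k" by simp
qed

lemma wbinom_eqI:
  fixes w :: "int \<Rightarrow> int \<Rightarrow> 'a::field"
  assumes "\<forall>s t. w s t \<noteq> 0" and "is_wbinom w B"
  shows "wbinom w = B"
  unfolding wbinom_def using assms is_wbinom_unique by (intro the_equality) blast+

definition ne_sum :: "(int \<Rightarrow> int \<Rightarrow> 'a::field) \<Rightarrow> int \<Rightarrow> int \<Rightarrow> 'a" where
  "ne_sum w n k = path_sum w {Nst, Est} (0, 0) (k, n - k)"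

text \<open>Hybrid paths into the quadrants N \<ge> 0 > M and N < 0 \<le> M are forced to start with a south
  resp. west step, after which they are unrestricted S/ES resp. W/NW paths from (0,-1) resp. (-1,0).\<close>

definition se_sum :: "(int \<Rightarrow> int \<Rightarrow> 'a::field) \<Rightarrow> int \<Rightarrow> int \<Rightarrow> 'a" where
  "se_sum w n k = path_sum w {Sst, ESst} (0, -1) (k, n - k)"

definition nw_sum :: "(int \<Rightarrow> int \<Rightarrow> 'a::field) \<Rightarrow> int \<Rightarrow> int \<Rightarrow> 'a" where
  "nw_sum w n k = path_sum w {Wst, NWst} (-1, 0) (k, n - k)"

definition path_binom :: "(int \<Rightarrow> int \<Rightarrow> 'a::field) \<Rightarrow> int \<Rightarrow> int \<Rightarrow> 'a" where
  "path_binom w n k = ne_sum w n k + se_sum w n k + nw_sum w n k"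

lemma ne_sum_rec:
  "ne_sum w (n + 1) k = ne_sum w n k + ne_sum w n (k - 1) * WW w k (n + 1 - k)
    + (if n + 1 = 0 \<and> k = 0 then 1 else 0)"
proof -
  have "finite (paths {Nst, Est} (0, 0) r)" for r
    by (rule finite_paths[where a = 1 and b = 1]) (auto simp: linear_form_def)
  from path_sum_last_step[OF _ this, of w "(k, n + 1 - k)"] show ?thesis
    by (simp add: ne_sum_def prev_point_def algebra_simps)
qed

lemma se_sum_rec:
  "se_sum w (n + 1) k = se_sum w n k + se_sum w n (k - 1) * WW w k (n + 1 - k)
    - (if n + 1 = 0 \<and> k = 0 then 1 else 0)"
proof -
  have "finite (paths {Sst, ESst} (0, -1) r)" for r
    by (rule finite_paths[where a = 0 and b = "-1"]) (auto simp: linear_form_def)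
  from path_sum_last_step[OF _ this, of w "(k, n - k)"] show ?thesis
    by (simp add: se_sum_def prev_point_def algebra_simps)
qed

lemma nw_sum_rec:
  fixes w :: "int \<Rightarrow> int \<Rightarrow> 'a::field"
  assumes "\<forall>s t. w s t \<noteq> 0"
  shows "nw_sum w (n + 1) k = nw_sum w n k + nw_sum w n (k - 1) * WW w k (n + 1 - k)
    - (if n + 1 = 0 \<and> k = 0 then 1 else 0)"
proof -
  have "finite (paths {Wst, NWst} (-1, 0) r)" for r
    by (rule finite_paths[where a = "-1" and b = 0]) (auto simp: linear_form_def)
  from path_sum_last_step[OF _ this, of w "(k - 1, n + 1 - k)"]
  have "nw_sum w n (k - 1) = (if n + 1 = 0 \<and> k = 0 then 1 else 0)
    + (nw_sum w (n + 1) k - nw_sum w n k) / WW w k (n + 1 - k)"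
    by (simp add: nw_sum_def prev_point_def algebra_simps divide_inverse)
  then show ?thesis
    using WW_nonzero[OF assms] by (auto simp: field_simps)
qed

lemma ne_sum_eq_0: "k < 0 \<or> n < k \<Longrightarrow> ne_sum w n k = 0"
  unfolding ne_sum_def
  by (auto intro: path_sum_eq_0[where a = 1 and b = 0] path_sum_eq_0[where a = 0 and b = 1]
      simp: linear_form_def)

lemma se_sum_eq_0: "k < 0 \<or> k \<le> n \<Longrightarrow> se_sum w n k = 0"
  unfolding se_sum_def
  by (auto intro: path_sum_eq_0[where a = 1 and b = 0] path_sum_eq_0[where a = 0 and b = "-1"]
      simp: linear_form_def)

lemma nw_sum_eq_0: "0 \<le> k \<or> n < k \<Longrightarrow> nw_sum w n k = 0"
  unfolding nw_sum_def
  by (auto intro: path_sum_eq_0[where a = "-1" and b = 0] path_sum_eq_0[where a = 0 and b = 1]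
      simp: linear_form_def)

lemma ne_sum_0_0: "ne_sum w 0 0 = 1"
  unfolding ne_sum_def
  by (auto intro: path_sum_refl[where a = 1 and b = 1] simp: linear_form_def)

lemma path_binom_col_0: "path_binom w n 0 = 1"
proof -
  have "ne_sum w (i + 1) 0 + se_sum w (i + 1) 0 = ne_sum w i 0 + se_sum w i 0" for i
    using ne_sum_rec[of w i 0] se_sum_rec[of w i 0] ne_sum_eq_0[of "-1" i w] se_sum_eq_0[of "-1" i w]
    by simp
  then have "ne_sum w n 0 + se_sum w n 0 = ne_sum w 0 0 + se_sum w 0 0"
    by (rule int_shift_invariant_const)
  then show ?thesis
    by (simp add: path_binom_def ne_sum_0_0 se_sum_eq_0 nw_sum_eq_0)
qed

lemma path_binom_diag:
  fixes w :: "int \<Rightarrow> int \<Rightarrow> 'a::field"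
  assumes "\<forall>s t. w s t \<noteq> 0"
  shows "path_binom w n n = 1"
proof -
  have "ne_sum w (i + 1) (i + 1) + nw_sum w (i + 1) (i + 1) = ne_sum w i i + nw_sum w i i" for i
    using ne_sum_rec[of w i "i + 1"] nw_sum_rec[OF assms, of i "i + 1"]
      ne_sum_eq_0[of "i + 1" i w] nw_sum_eq_0[of "i + 1" i w]
    by simp
  then have "ne_sum w n n + nw_sum w n n = ne_sum w 0 0 + nw_sum w 0 0"
    by (rule int_shift_invariant_const)
  then show ?thesis
    by (simp add: path_binom_def ne_sum_0_0 se_sum_eq_0 nw_sum_eq_0)
qed

lemma is_wbinom_path_binom:
  fixes w :: "int \<Rightarrow> int \<Rightarrow> 'a::field"
  assumes "\<forall>s t. w s t \<noteq> 0"
  shows "is_wbinom w (path_binom w)"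
  unfolding is_wbinom_def
proof (intro conjI allI impI)
  fix n k :: int
  assume "(n + 1, k) \<noteq> (0, 0)"
  then show "path_binom w (n + 1) k = path_binom w n k + path_binom w n (k - 1) * WW w k (n + 1 - k)"
    unfolding path_binom_def ne_sum_rec se_sum_rec nw_sum_rec[OF assms] by (simp add: algebra_simps)
qed (simp_all add: path_binom_col_0 path_binom_diag[OF assms])

lemma sum_hybrid_paths:
  "(\<Sum>P\<in>hybrid_paths k (n - k). path_weight w P) = path_binom w n k"
proof -
  have inj: "inj_on ((#) m) X" for m :: move and X
    by (auto simp: inj_on_def)
  consider "0 \<le> k" "k \<le> n" | "0 \<le> k" "n < k" | "k < 0" "k \<le> n" | "k < 0" "n < k"
    by linarith
  then show ?thesis
  proof cases
    case 1
    then have "hybrid_paths k (n - k) = paths {Nst, Est} (0, 0) (k, n - k)"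
      by (simp add: hybrid_paths_def paths_def)
    then show ?thesis
      using 1 by (simp add: path_binom_def ne_sum_def path_sum_def path_weight_def se_sum_eq_0 nw_sum_eq_0)
  next
    case 2
    then have "hybrid_paths k (n - k) = (#) Sst ` paths {Sst, ESst} (0, -1) (k, n - k)"
      by (auto simp: hybrid_paths_def paths_def apply_move_def neq_Nil_conv)
    then show ?thesis
      using 2 by (simp add: path_binom_def se_sum_def path_sum_def path_weight_def sum.reindex[OF inj]
          apply_move_def ne_sum_eq_0 nw_sum_eq_0)
  next
    case 3
    then have "hybrid_paths k (n - k) = (#) Wst ` paths {Wst, NWst} (-1, 0) (k, n - k)"
      by (auto simp: hybrid_paths_def paths_def apply_move_def neq_Nil_conv)
    then show ?thesis
      using 3 by (simp add: path_binom_def nw_sum_def path_sum_def path_weight_def sum.reindex[OF inj]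
          apply_move_def ne_sum_eq_0 se_sum_eq_0)
  next
    case 4
    then show ?thesis
      by (simp add: hybrid_paths_def path_binom_def ne_sum_eq_0 se_sum_eq_0 nw_sum_eq_0)
  qed
qed

theorem theorem4:
  fixes w :: "int \<Rightarrow> int \<Rightarrow> 'a::field" and n k :: int
  assumes "\<forall>s t. w s t \<noteq> 0"
  shows "(\<Sum>P\<in>hybrid_paths k (n - k). path_weight w P) = wbinom w n k"
  using sum_hybrid_paths wbinom_eqI[OF assms is_wbinom_path_binom[OF assms]] by simp

end
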